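(* Let $2\le d_1\le d_2\le d_3\le d_4$ and let $\rho$ be any (normalized) mixed state on $H_1\otimes H_2\otimes H_3\otimes H_4$ with $\dim H_i=d_i$. Then for every integer $s$ with $2\le s\le d_1$, $$C^2(\rho)\ \ge\ \frac{1}{\binom{d_1-2}{s-2}\binom{d_2-2}{s-2}\binom{d_3-1}{s-1}\binom{d_4-1}{s-1}}\sum_{\rho_{s\otimes s\otimes s\otimes s}}C^2(\rho_{s\otimes s\otimes s\otimes s}),$$ where the sum runs over all possible $s\otimes s\otimes s\otimes s$ substates $\rho_{s\otimes s\otimes s\otimes s}$ of $\rho$.
   Context: Each $H_i\cong\mathbb{C}^{d_i}$ has a fixed computational basis. $C$ denotes the four-partite concurrence: for a (not necessarily normalized) vector $|\varphi\rangle$ with $\sigma=|\varphi\rangle\langle\varphi|$, $C(|\varphi\rangle)=2^{-1}\sqrt{14(\mathrm{tr}\,\sigma)^2-\sum_\alpha\mathrm{tr}(\sigma_\alpha^2)}$, $\alpha$ running over the 14 nonempty proper subsets of $\{1,2,3,4\}$ and $\sigma_\alpha=\mathrm{tr}_{\bar\alpha}\sigma$; for a (possibly unnormalized) positive semidefinite $\sigma$, $C(\sigma)=\min\sum_iC(|\psi_i\rangle)$ over all decompositions $\sigma=\sum_i|\psi_i\rangle\langle\psi_i|$ into unnormalized vectors. Substates: given subsets $S_i\subseteq\{1,\dots,d_i\}$ with $|S_i|=s$ and projectors $G_i=\sum_{x\in S_i}|x\rangle\langle x|$, the $s\otimes s\otimes s\otimes s$ substate of $\rho$ is the unnormalized operator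 $(G_1\otimes G_2\otimes G_3\otimes G_4)\rho(G_1\otimes G_2\otimes G_3\otimes G_4)$ on $\otimes_i\mathrm{span}\{|x\rangle:x\in S_i\}$. $\binom{n}{k}=n!/(k!(n-k)!)$. *)

theory Defs
  imports Complex_Main
begin

text \<open>A basis index of the (sub)system on the parties in P is a function x :: nat => nat with
  x i in A i for i in P and x i = 0 (dummy) outside P. Vectors and operators are complex
  valued functions on such indices (values outside the carrier are irrelevant).\<close>

definition parties :: "nat set" where
  "parties = {0..<4}"

definition idx :: "(nat \<Rightarrow> nat set) \<Rightarrow> nat set \<Rightarrow> (nat \<Rightarrow> nat) set" where
  "idx A P = {x. (\<forall>i\<in>P. x i \<in> A i) \<and> (\<forall>i. i \<notin> P \<longrightarrow> x i = 0)}"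

definition merge :: "nat set \<Rightarrow> (nat \<Rightarrow> nat) \<Rightarrow> (nat \<Rightarrow> nat) \<Rightarrow> (nat \<Rightarrow> nat)" where
  "merge P a b = (\<lambda>i. if i \<in> P then a i else b i)"

type_synonym vec4 = "(nat \<Rightarrow> nat) \<Rightarrow> complex"
type_synonym op4 = "(nat \<Rightarrow> nat) \<Rightarrow> (nat \<Rightarrow> nat) \<Rightarrow> complex"

definition trace4 :: "(nat \<Rightarrow> nat set) \<Rightarrow> op4 \<Rightarrow> complex" where
  "trace4 A \<sigma> = (\<Sum>x\<in>idx A parties. \<sigma> x x)"

definition ptrace :: "(nat \<Rightarrow> nat set) \<Rightarrow> nat set \<Rightarrow> op4 \<Rightarrow> op4" where
  "ptrace A \<alpha> \<sigma> = (\<lambda>a a'. \<Sum>b\<in>idx A (parties - \<alpha>). \<sigma> (merge \<alpha> a b) (merge \<alpha> a' b))"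

definition trsq :: "(nat \<Rightarrow> nat set) \<Rightarrow> nat set \<Rightarrow> op4 \<Rightarrow> complex" where
  "trsq A \<alpha> \<sigma> = (let \<tau> = ptrace A \<alpha> \<sigma> in
      \<Sum>a\<in>idx A \<alpha>. \<Sum>a'\<in>idx A \<alpha>. \<tau> a a' * \<tau> a' a)"

definition proj :: "vec4 \<Rightarrow> op4" where
  "proj \<phi> = (\<lambda>x y. \<phi> x * cnj (\<phi> y))"

definition bipartitions :: "nat set set" where
  "bipartitions = {\<alpha>. \<alpha> \<subseteq> parties \<and> \<alpha> \<noteq> {} \<and> \<alpha> \<noteq> parties}"

definition conc_vec :: "(nat \<Rightarrow> nat set) \<Rightarrow> vec4 \<Rightarrow> real" where
  "conc_vec A \<phi> = (let \<sigma> = proj \<phi> in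
     sqrt (14 * (Re (trace4 A \<sigma>))\<^sup>2 - (\<Sum>\<alpha>\<in>bipartitions. Re (trsq A \<alpha> \<sigma>))) / 2)"

text \<open>Concurrence of a (possibly unnormalized) PSD operator: infimum (= minimum)
  over all finite decompositions into unnormalized vectors.\<close>
definition conc :: "(nat \<Rightarrow> nat set) \<Rightarrow> op4 \<Rightarrow> real" where
  "conc A \<sigma> = Inf {sum_list (map (conc_vec A) \<psi>s) | \<psi>s.
      \<forall>x\<in>idx A parties. \<forall>y\<in>idx A parties. \<sigma> x y = (\<Sum>\<psi>\<leftarrow>\<psi>s. proj \<psi> x y)}"

definition full_carrier :: "(nat \<Rightarrow> nat) \<Rightarrow> nat \<Rightarrow> nat set" where
  "full_carrier d = (\<lambda>i. {..<d i})"

definition density_op :: "(nat \<Rightarrow> nat) \<Rightarrow> op4 \<Rightarrow> bool" where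
  "density_op d \<rho> \<longleftrightarrow>
     (\<forall>x\<in>idx (full_carrier d) parties. \<forall>y\<in>idx (full_carrier d) parties. \<rho> y x = cnj (\<rho> x y)) \<and>
     (\<forall>\<phi>::vec4. let q = (\<Sum>x\<in>idx (full_carrier d) parties. \<Sum>y\<in>idx (full_carrier d) parties.
                      cnj (\<phi> x) * \<rho> x y * \<phi> y) in Im q = 0 \<and> Re q \<ge> 0) \<and>
     trace4 (full_carrier d) \<rho> = 1"

text \<open>Choices of s-element subsets S i of the local bases; the substate is rho restricted to
  idx S parties, viewed as an operator on the tensor product of the spans.\<close>
definition substate_choices :: "(nat \<Rightarrow> nat) \<Rightarrow> nat \<Rightarrow> (nat \<Rightarrow> nat set) set" where
  "substate_choices d s = {S. (\<forall>i\<in>parties. S i \<subseteq> {..<d i} \<and> card (S i) = s) \<and>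
                              (\<forall>i. i \<notin> parties \<longrightarrow> S i = {})}"

end

theory Submission
  imports Defs "HOL-Analysis.L2_Norm"
begin

text \<open>For a pure state \<open>\<psi>\<close> and a bipartition \<open>\<alpha>\<close>, \<open>(tr \<sigma>)\<^sup>2 - tr \<sigma>\<^sub>\<alpha>\<^sup>2\<close> is half the sum over
  all pairs of basis indices \<open>x, y\<close> of \<open>|\<psi>(x) \<psi>(y) - \<psi>(x') \<psi>(y')|\<^sup>2\<close>, where \<open>x', y'\<close> arise from
  \<open>x, y\<close> by exchanging their \<open>\<alpha>\<close>-parts; hence \<open>C\<^sup>2\<close> is a sum of nonnegative terms indexed by
  pairs of basis indices. A term can only be nonzero if \<open>x\<close> and \<open>y\<close> differ in at least two
  parties, one in \<open>\<alpha>\<close> and one outside, and a simple count shows that such a pair lies in at most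
  \<open>K = C(d\<^sub>1-2,s-2) C(d\<^sub>2-2,s-2) C(d\<^sub>3-1,s-1) C(d\<^sub>4-1,s-1)\<close> substates. This gives
  \<open>\<Sum>\<^sub>S C\<^sup>2(\<psi>\<^sub>S) \<le> K C\<^sup>2(\<psi>)\<close> for pure states. For a mixed state, a decomposition of \<open>\<rho>\<close> restricts
  to decompositions of all substates, and Minkowski's inequality for the \<open>\<ell>\<^sup>2\<close>-norm over the
  substates transfers the pure bound to the convex roof. The decompositions over which the
  infimum is taken exist by a Cholesky-type factorisation of the positive semidefinite \<open>\<rho>\<close>.\<close>

lemma finite_idx: "finite P \<Longrightarrow> (\<And>i. i \<in> P \<Longrightarrow> finite (A i)) \<Longrightarrow> finite (idx A P)"
proof -
  assume fin: "finite P" "\<And>i. i \<in> P \<Longrightarrow> finite (A i)"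
  have "idx A P \<subseteq> {f. \<forall>i. (i \<in> P \<longrightarrow> f i \<in> \<Union>(A ` P)) \<and> (i \<notin> P \<longrightarrow> f i = 0)}"
    by (auto simp: idx_def)
  moreover have "finite {f. \<forall>i. (i \<in> P \<longrightarrow> f i \<in> \<Union>(A ` P)) \<and> (i \<notin> P \<longrightarrow> f i = (0::nat))}"
    by (rule finite_set_of_finite_funs) (use fin in auto)
  ultimately show ?thesis by (rule finite_subset)
qed

lemma merge_merge_swap: "merge \<alpha> (merge \<alpha> x y) (merge \<alpha> y x) = x"
  by (auto simp: merge_def)

lemma merge_merge: "merge \<alpha> (merge \<alpha> a b) (merge \<alpha> a' b') = merge \<alpha> a b'"
  by (auto simp: merge_def)

lemma merge_in_idx: "x \<in> idx A P \<Longrightarrow> y \<in> idx A P \<Longrightarrow> merge \<alpha> x y \<in> idx A P"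
  by (auto simp: merge_def idx_def)

lemma sum_idx_merge:
  assumes "\<alpha> \<subseteq> parties"
  shows "(\<Sum>x\<in>idx A parties. f x) = (\<Sum>a\<in>idx A \<alpha>. \<Sum>b\<in>idx A (parties - \<alpha>). f (merge \<alpha> a b))"
proof -
  have "(\<Sum>a\<in>idx A \<alpha>. \<Sum>b\<in>idx A (parties - \<alpha>). f (merge \<alpha> a b))
     = (\<Sum>p\<in>idx A \<alpha> \<times> idx A (parties - \<alpha>). f (merge \<alpha> (fst p) (snd p)))"
    by (simp add: sum.cartesian_product case_prod_beta)
  also have "\<dots> = (\<Sum>x\<in>idx A parties. f x)"
    by (rule sum.reindex_bij_witness[where j="\<lambda>p. merge \<alpha> (fst p) (snd p)"
          and i="\<lambda>x. (\<lambda>i. if i \<in> \<alpha> then x i else 0, \<lambda>i. if i \<in> parties - \<alpha> then x i else 0)"])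
      (use assms in \<open>auto simp: idx_def merge_def fun_eq_iff\<close>)
  finally show ?thesis by simp
qed

lemma sum_pairs_merge_swap:
  "(\<Sum>x\<in>idx A parties. \<Sum>y\<in>idx A parties. h (merge \<alpha> x y) (merge \<alpha> y x))
   = (\<Sum>x\<in>idx A parties. \<Sum>y\<in>idx A parties. h x y)"
proof -
  let ?X = "idx A parties"
  have "(\<Sum>x\<in>?X. \<Sum>y\<in>?X. h (merge \<alpha> x y) (merge \<alpha> y x))
     = (\<Sum>p\<in>?X \<times> ?X. h (merge \<alpha> (fst p) (snd p)) (merge \<alpha> (snd p) (fst p)))"
    by (simp add: sum.cartesian_product case_prod_beta)
  also have "\<dots> = (\<Sum>p\<in>?X \<times> ?X. h (fst p) (snd p))"
    by (rule sum.reindex_bij_witness[where i="\<lambda>p. (merge \<alpha> (fst p) (snd p), merge \<alpha> (snd p) (fst p))"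
          and j="\<lambda>p. (merge \<alpha> (fst p) (snd p), merge \<alpha> (snd p) (fst p))"])
      (auto simp: merge_merge_swap merge_in_idx)
  also have "\<dots> = (\<Sum>x\<in>?X. \<Sum>y\<in>?X. h x y)"
    by (simp add: sum.cartesian_product case_prod_beta)
  finally show ?thesis .
qed

lemma idx_full_carrier_finite: "finite (idx (full_carrier d) parties)"
  by (rule finite_idx) (auto simp: parties_def full_carrier_def)

lemma idx_substate_subset: "S \<in> substate_choices d s \<Longrightarrow> idx S parties \<subseteq> idx (full_carrier d) parties"
  unfolding substate_choices_def idx_def full_carrier_def by blast

lemma substate_choices_finite: "finite (substate_choices d s)"
proof -
  let ?B = "Pow (\<Union>i\<in>parties. {..<d i})"
  have "substate_choices d s \<subseteq> {S. \<forall>i. (i \<in> parties \<longrightarrow> S i \<in> ?B) \<and> (i \<notin> parties \<longrightarrow> S i = {})}"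
    by (auto simp: substate_choices_def)
  moreover have "finite {S. \<forall>i. (i \<in> parties \<longrightarrow> S i \<in> ?B) \<and> (i \<notin> parties \<longrightarrow> S i = ({}::nat set))}"
    by (rule finite_set_of_finite_funs) (auto simp: parties_def)
  ultimately show ?thesis by (rule finite_subset)
qed

section \<open>The concurrence of a pure state as a sum over pairs of basis indices\<close>

definition merge_defect :: "nat set \<Rightarrow> vec4 \<Rightarrow> (nat \<Rightarrow> nat) \<Rightarrow> (nat \<Rightarrow> nat) \<Rightarrow> real" where
  "merge_defect \<alpha> \<psi> x y = (cmod (\<psi> x * \<psi> y - \<psi> (merge \<alpha> x y) * \<psi> (merge \<alpha> y x)))\<^sup>2"

lemma merge_defect_nonneg: "0 \<le> merge_defect \<alpha> \<psi> x y"
  by (simp add: merge_defect_def)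

lemma trsq_proj:
  assumes "\<alpha> \<subseteq> parties"
  shows "trsq A \<alpha> (proj \<psi>) = (\<Sum>x\<in>idx A parties. \<Sum>y\<in>idx A parties.
           \<psi> x * \<psi> y * cnj (\<psi> (merge \<alpha> x y)) * cnj (\<psi> (merge \<alpha> y x)))"
proof -
  let ?I = "idx A \<alpha>" and ?J = "idx A (parties - \<alpha>)"
  have "trsq A \<alpha> (proj \<psi>) = (\<Sum>a\<in>?I. \<Sum>a'\<in>?I. (\<Sum>b\<in>?J. \<psi> (merge \<alpha> a b) * cnj (\<psi> (merge \<alpha> a' b)))
        * (\<Sum>b'\<in>?J. \<psi> (merge \<alpha> a' b') * cnj (\<psi> (merge \<alpha> a b'))))"
    by (simp add: trsq_def ptrace_def proj_def)
  also have "\<dots> = (\<Sum>a\<in>?I. \<Sum>a'\<in>?I. \<Sum>b\<in>?J. \<Sum>b'\<in>?J. \<psi> (merge \<alpha> a b) * \<psi> (merge \<alpha> a' b') *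
        cnj (\<psi> (merge \<alpha> a b')) * cnj (\<psi> (merge \<alpha> a' b)))"
    by (simp add: sum_product mult_ac)
  also have "\<dots> = (\<Sum>a\<in>?I. \<Sum>b\<in>?J. \<Sum>a'\<in>?I. \<Sum>b'\<in>?J. \<psi> (merge \<alpha> a b) * \<psi> (merge \<alpha> a' b') *
        cnj (\<psi> (merge \<alpha> a b')) * cnj (\<psi> (merge \<alpha> a' b)))"
    by (rule sum.cong[OF refl], rule sum.swap)
  also have "\<dots> = (\<Sum>x\<in>idx A parties. \<Sum>y\<in>idx A parties.
           \<psi> x * \<psi> y * cnj (\<psi> (merge \<alpha> x y)) * cnj (\<psi> (merge \<alpha> y x)))"
    by (simp add: sum_idx_merge[OF assms] merge_merge)
  finally show ?thesis .
qed

lemma cmod_diff_power2: "(cmod (u - v))\<^sup>2 = (cmod u)\<^sup>2 + (cmod v)\<^sup>2 - 2 * Re (u * cnj v)"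
  unfolding cmod_power2 by (simp add: power2_eq_square algebra_simps)

lemma Re_trace4_proj: "Re (trace4 A (proj \<psi>)) = (\<Sum>x\<in>idx A parties. (cmod (\<psi> x))\<^sup>2)"
  by (simp add: trace4_def proj_def Re_sum flip: complex_norm_square)

lemma sum_merge_defect:
  assumes "\<alpha> \<subseteq> parties"
  shows "(\<Sum>x\<in>idx A parties. \<Sum>y\<in>idx A parties. merge_defect \<alpha> \<psi> x y)
    = 2 * (Re (trace4 A (proj \<psi>)))\<^sup>2 - 2 * Re (trsq A \<alpha> (proj \<psi>))"
proof -
  let ?X = "idx A parties"
  let ?n = "\<lambda>x. (cmod (\<psi> x))\<^sup>2"
  have "(\<Sum>x\<in>?X. \<Sum>y\<in>?X. merge_defect \<alpha> \<psi> x y) = (\<Sum>x\<in>?X. \<Sum>y\<in>?X. ?n x * ?n y)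
      + (\<Sum>x\<in>?X. \<Sum>y\<in>?X. ?n (merge \<alpha> x y) * ?n (merge \<alpha> y x))
      - 2 * (\<Sum>x\<in>?X. \<Sum>y\<in>?X. Re (\<psi> x * \<psi> y * cnj (\<psi> (merge \<alpha> x y)) * cnj (\<psi> (merge \<alpha> y x))))"
    by (simp add: merge_defect_def cmod_diff_power2 sum.distrib sum_subtractf sum_distrib_left
        norm_mult power_mult_distrib mult_ac)
  also have "(\<Sum>x\<in>?X. \<Sum>y\<in>?X. ?n (merge \<alpha> x y) * ?n (merge \<alpha> y x)) = (\<Sum>x\<in>?X. \<Sum>y\<in>?X. ?n x * ?n y)"
    by (rule sum_pairs_merge_swap)
  also have "(\<Sum>x\<in>?X. \<Sum>y\<in>?X. ?n x * ?n y) = (Re (trace4 A (proj \<psi>)))\<^sup>2"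
    by (simp add: Re_trace4_proj power2_eq_square sum_product)
  also have "(\<Sum>x\<in>?X. \<Sum>y\<in>?X. Re (\<psi> x * \<psi> y * cnj (\<psi> (merge \<alpha> x y)) * cnj (\<psi> (merge \<alpha> y x))))
      = Re (trsq A \<alpha> (proj \<psi>))"
    by (simp add: trsq_proj[OF assms] Re_sum)
  finally show ?thesis by simp
qed

lemma card_bipartitions: "card bipartitions = 14"
proof -
  have "bipartitions = Pow parties - {{}, parties}"
    by (auto simp: bipartitions_def)
  moreover have "card (Pow parties - {{}, parties}) = 14"
    by (subst card_Diff_subset) (auto simp: card_Pow parties_def)
  ultimately show ?thesis
    by simp
qed

lemma conc_vec_radicand:
  "14 * (Re (trace4 A (proj \<psi>)))\<^sup>2 - (\<Sum>\<alpha>\<in>bipartitions. Re (trsq A \<alpha> (proj \<psi>)))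
   = (\<Sum>\<alpha>\<in>bipartitions. \<Sum>x\<in>idx A parties. \<Sum>y\<in>idx A parties. merge_defect \<alpha> \<psi> x y) / 2"
proof -
  have "14 * (Re (trace4 A (proj \<psi>)))\<^sup>2 - (\<Sum>\<alpha>\<in>bipartitions. Re (trsq A \<alpha> (proj \<psi>)))
     = (\<Sum>\<alpha>\<in>bipartitions. (Re (trace4 A (proj \<psi>)))\<^sup>2 - Re (trsq A \<alpha> (proj \<psi>)))"
    by (simp add: sum_subtractf card_bipartitions)
  also have "\<dots> = (\<Sum>\<alpha>\<in>bipartitions. (\<Sum>x\<in>idx A parties. \<Sum>y\<in>idx A parties. merge_defect \<alpha> \<psi> x y) / 2)"
    by (rule sum.cong[OF refl]) (simp add: sum_merge_defect bipartitions_def)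
  finally show ?thesis
    by (simp add: sum_divide_distrib)
qed

lemma conc_vec_nonneg: "0 \<le> conc_vec A \<psi>"
  unfolding conc_vec_def Let_def conc_vec_radicand
  by (simp add: sum_nonneg merge_defect_nonneg)

lemma conc_vec_power2:
  "(conc_vec A \<psi>)\<^sup>2 = (\<Sum>\<alpha>\<in>bipartitions. \<Sum>x\<in>idx A parties. \<Sum>y\<in>idx A parties. merge_defect \<alpha> \<psi> x y) / 8"
  unfolding conc_vec_def Let_def conc_vec_radicand
  by (simp add: power_divide sum_nonneg merge_defect_nonneg)

text \<open>If \<open>x\<close> and \<open>y\<close> agree on \<open>\<alpha>\<close> or on its complement, exchanging their \<open>\<alpha>\<close>-parts permutes them.\<close>

lemma merge_defect_nonzero_witness:
  assumes "x \<in> idx A parties" "y \<in> idx A parties" "merge_defect \<alpha> \<psi> x y \<noteq> 0"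
  obtains i j where "i \<in> \<alpha>" "j \<in> parties - \<alpha>" "x i \<noteq> y i" "x j \<noteq> y j"
proof -
  have "\<not> (\<forall>i\<in>\<alpha>. x i = y i)"
  proof
    assume "\<forall>i\<in>\<alpha>. x i = y i"
    then have "merge \<alpha> x y = y" "merge \<alpha> y x = x"
      by (auto simp: merge_def fun_eq_iff)
    then show False
      using assms(3) by (simp add: merge_defect_def mult.commute)
  qed
  moreover have "\<not> (\<forall>j\<in>parties - \<alpha>. x j = y j)"
  proof
    assume agree: "\<forall>j\<in>parties - \<alpha>. x j = y j"
    have "x j = y j" if "j \<notin> \<alpha>" for j
      using agree assms(1,2) that by (cases "j \<in> parties") (auto simp: idx_def)
    then have "merge \<alpha> x y = x" "merge \<alpha> y x = y"
      by (auto simp: merge_def fun_eq_iff)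
    then show False
      using assms(3) by (simp add: merge_defect_def mult.commute)
  qed
  ultimately show thesis
    using that by blast
qed

section \<open>Counting the substates containing a pair of basis indices\<close>

definition max_pair_multiplicity :: "(nat \<Rightarrow> nat) \<Rightarrow> nat \<Rightarrow> real" where
  "max_pair_multiplicity d s = real ((d 0 - 2) choose (s - 2)) * real ((d 1 - 2) choose (s - 2))
     * real ((d 2 - 1) choose (s - 1)) * real ((d 3 - 1) choose (s - 1))"

lemma card_supersets_of_card:
  assumes "finite N" "B \<subseteq> N" "card B \<le> s"
  shows "card {U. U \<subseteq> N \<and> card U = s \<and> B \<subseteq> U} = (card N - card B) choose (s - card B)"
proof -
  have fB: "finite B"
    using assms(1,2) finite_subset by blast
  have "bij_betw (\<lambda>U. U - B) {U. U \<subseteq> N \<and> card U = s \<and> B \<subseteq> U} {V. V \<subseteq> N - B \<and> card V = s - card B}"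
  proof (rule bij_betw_byWitness[where f'="\<lambda>V. V \<union> B"])
    show "(\<lambda>U. U - B) ` {U. U \<subseteq> N \<and> card U = s \<and> B \<subseteq> U} \<subseteq> {V. V \<subseteq> N - B \<and> card V = s - card B}"
      using fB by (auto simp: card_Diff_subset)
    show "(\<lambda>V. V \<union> B) ` {V. V \<subseteq> N - B \<and> card V = s - card B} \<subseteq> {U. U \<subseteq> N \<and> card U = s \<and> B \<subseteq> U}"
    proof (rule image_subsetI)
      fix V assume "V \<in> {V. V \<subseteq> N - B \<and> card V = s - card B}"
      then have V: "V \<subseteq> N - B" "card V = s - card B"
        by auto
      have "finite V"
        using V(1) assms(1) finite_subset by blast
      then have "card (V \<union> B) = card V + card B"
        using V fB by (intro card_Un_disjoint) auto
      then show "V \<union> B \<in> {U. U \<subseteq> N \<and> card U = s \<and> B \<subseteq> U}"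
        using V assms(2,3) by auto
    qed
  qed auto
  then have "card {U. U \<subseteq> N \<and> card U = s \<and> B \<subseteq> U} = card {V. V \<subseteq> N - B \<and> card V = s - card B}"
    by (rule bij_betw_same_card)
  also have "\<dots> = card (N - B) choose (s - card B)"
    using assms(1) by (intro n_subsets) simp
  finally show ?thesis
    using assms fB by (simp add: card_Diff_subset)
qed

lemma real_binomial_diminish:
  assumes "2 \<le> s" "s \<le> D"
  shows "real ((D - 2) choose (s - 2)) = real ((D - 1) choose (s - 1)) * (real (s - 1) / real (D - 1))"
proof -
  have "Suc (s - 2) * (Suc (D - 2) choose Suc (s - 2)) = Suc (D - 2) * ((D - 2) choose (s - 2))"
    by (rule Suc_times_binomial)
  moreover have "Suc (s - 2) = s - 1" "Suc (D - 2) = D - 1"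
    using assms by auto
  ultimately have "real (s - 1) * real ((D - 1) choose (s - 1)) = real (D - 1) * real ((D - 2) choose (s - 2))"
    by (metis of_nat_mult)
  moreover have "real (D - 1) > 0"
    using assms by simp
  ultimately show ?thesis
    by (simp add: field_simps)
qed

lemma prod_le_two_factors:
  fixes t :: "'a \<Rightarrow> real"
  assumes "finite I" "\<And>k. k \<in> I \<Longrightarrow> 0 \<le> t k \<and> t k \<le> 1" "i \<in> I" "j \<in> I" "i \<noteq> j"
  shows "prod t I \<le> t i * t j"
proof -
  have "prod t I = prod t (I - {i, j}) * (t i * t j)"
    using prod.subset_diff[of "{i, j}" I t] assms by (simp add: mult.commute)
  also have "\<dots> \<le> 1 * (t i * t j)"
    using assms by (intro mult_right_mono prod_le_1) auto
  finally show ?thesis by simp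
qed

lemma prod_parties: "prod f parties = f 0 * f 1 * f 2 * f 3"
  by (simp add: parties_def numeral_eq_Suc atLeast0LessThan lessThan_Suc mult_ac)

lemma card_substates_containing_le:
  fixes x y d :: "nat \<Rightarrow> nat" and s :: nat
  defines "T \<equiv> \<lambda>i. {U. U \<subseteq> {..<d i} \<and> card U = s \<and> {x i, y i} \<subseteq> U}"
  shows "card {S\<in>substate_choices d s. x \<in> idx S parties \<and> y \<in> idx S parties}
      \<le> (\<Prod>i\<in>parties. card (T i))"
proof -
  let ?C = "{S\<in>substate_choices d s. x \<in> idx S parties \<and> y \<in> idx S parties}"
  have fin: "finite (T i)" for i
    by (rule finite_subset[of _ "Pow {..<d i}"]) (auto simp: T_def)
  have "card ?C \<le> card (T 0 \<times> T 1 \<times> T 2 \<times> T 3)"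
  proof (rule card_inj_on_le[where f="\<lambda>S. (S 0, S 1, S 2, S 3)"])
    show "inj_on (\<lambda>S. (S 0, S 1, S 2, S 3)) ?C"
    proof (rule inj_onI, rule ext)
      fix S S' i assume "S \<in> ?C" "S' \<in> ?C" "(S 0, S 1, S 2, S 3) = (S' 0, S' 1, S' 2, S' 3)"
      then show "S i = S' i"
        by (cases "i \<in> parties") (auto simp: substate_choices_def parties_def less_Suc_eq numeral_eq_Suc)
    qed
    show "(\<lambda>S. (S 0, S 1, S 2, S 3)) ` ?C \<subseteq> T 0 \<times> T 1 \<times> T 2 \<times> T 3"
      by (auto simp: T_def substate_choices_def idx_def parties_def)
  qed (simp add: fin)
  then show ?thesis
    by (simp add: card_cartesian_product prod_parties mult_ac)
qed

lemma real_card_supersets_of_pair: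
  assumes "2 \<le> s" "s \<le> D" "a < D" "b < D"
  shows "real (card {U. U \<subseteq> {..<D} \<and> card U = s \<and> {a, b} \<subseteq> U})
    = real ((D - 1) choose (s - 1)) * (if a = b then 1 else real (s - 1) / real (D - 1))"
proof -
  have "card {a, b} = (if a = b then 1 else 2)"
    by auto
  then show ?thesis
    using card_supersets_of_card[of "{..<D}" "{a, b}" s] real_binomial_diminish[OF assms(1,2)] assms
    by auto
qed

lemma prod_parties_le_first_two:
  fixes r t :: "nat \<Rightarrow> real"
  assumes r: "\<And>k l. k \<le> l \<Longrightarrow> l \<in> parties \<Longrightarrow> r l \<le> r k" "\<And>k. 0 \<le> r k"
    and t: "\<And>k. k \<in> parties \<Longrightarrow> 0 \<le> t k \<and> t k \<le> 1"
    and ij: "i \<in> parties" "j \<in> parties" "i \<noteq> j" "t i = r i" "t j = r j"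
  shows "prod t parties \<le> r 0 * r 1"
proof -
  have "prod t parties \<le> t i * t j"
    by (rule prod_le_two_factors) (use t ij in \<open>auto simp: parties_def\<close>)
  also have "\<dots> = r (min i j) * r (max i j)"
    using ij by (simp add: min_def max_def mult.commute)
  also have "\<dots> \<le> r 0 * r 1"
    using ij by (intro mult_mono r) (auto simp: min_def max_def)
  finally show ?thesis .
qed

text \<open>Party \<open>k\<close> contributes \<open>C(d\<^sub>k-1,s-1)\<close> choices if \<open>x\<^sub>k = y\<^sub>k\<close> and \<open>C(d\<^sub>k-2,s-2)\<close> otherwise;
  the latter is smaller by the factor \<open>(s-1)/(d\<^sub>k-1)\<close>, which decreases with \<open>d\<^sub>k\<close>, so the worst case
  is that \<open>x\<close> and \<open>y\<close> differ exactly in the two smallest parties.\<close>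

lemma card_substates_containing_pair_le:
  assumes d: "2 \<le> s" "s \<le> d 0" "d 0 \<le> d 1" "d 1 \<le> d 2" "d 2 \<le> d 3"
    and xy: "x \<in> idx (full_carrier d) parties" "y \<in> idx (full_carrier d) parties"
    and ij: "i \<in> parties" "j \<in> parties" "i \<noteq> j" "x i \<noteq> y i" "x j \<noteq> y j"
  shows "real (card {S\<in>substate_choices d s. x \<in> idx S parties \<and> y \<in> idx S parties})
    \<le> max_pair_multiplicity d s"
proof -
  define m where "m k = real ((d k - 1) choose (s - 1))" for k
  define r where "r k = real (s - 1) / real (d k - 1)" for k
  define t where "t k = (if x k = y k then 1 else r k)" for k
  have d_mono: "d k \<le> d l" if "k \<le> l" "l \<in> parties" for k l
    using that d by (auto simp: parties_def less_Suc_eq numeral_eq_Suc le_Suc_eq)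
  have s_le: "s \<le> d k" if "k \<in> parties" for k
    using d_mono[of 0 k] that d by simp
  have r_antimono: "r l \<le> r k" if "k \<le> l" "l \<in> parties" for k l
  proof -
    have "k \<in> parties"
      using that by (auto simp: parties_def)
    then show ?thesis
      using d_mono[OF that] s_le[of k] s_le[OF that(2)] d unfolding r_def
      by (intro divide_left_mono) auto
  qed
  have "real (card {S\<in>substate_choices d s. x \<in> idx S parties \<and> y \<in> idx S parties})
      \<le> (\<Prod>k\<in>parties. real (card {U. U \<subseteq> {..<d k} \<and> card U = s \<and> {x k, y k} \<subseteq> U}))"
    unfolding of_nat_prod[symmetric] of_nat_le_iff by (rule card_substates_containing_le)
  also have "\<dots> = (\<Prod>k\<in>parties. m k * t k)"
  proof (rule prod.cong[OF refl])
    fix k assume k: "k \<in> parties"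
    then have "x k < d k" "y k < d k"
      using xy by (auto simp: idx_def full_carrier_def)
    then show "real (card {U. U \<subseteq> {..<d k} \<and> card U = s \<and> {x k, y k} \<subseteq> U}) = m k * t k"
      using real_card_supersets_of_pair[OF d(1) s_le[OF k]] by (simp add: m_def t_def r_def)
  qed
  also have "\<dots> = prod m parties * prod t parties"
    by (rule prod.distrib)
  also have "\<dots> \<le> prod m parties * (r 0 * r 1)"
  proof (intro mult_left_mono prod_nonneg)
    have "0 \<le> t k \<and> t k \<le> 1" if "k \<in> parties" for k
      using s_le[OF that] d by (auto simp: t_def r_def)
    then show "prod t parties \<le> r 0 * r 1"
      by (intro prod_parties_le_first_two[OF r_antimono]) (use ij in \<open>auto simp: r_def t_def\<close>)
  qed (simp add: m_def)
  also have "\<dots> = max_pair_multiplicity d s"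
    using real_binomial_diminish[OF d(1) s_le[of 0]] real_binomial_diminish[OF d(1) s_le[of 1]]
    unfolding prod_parties by (simp add: max_pair_multiplicity_def m_def r_def parties_def mult_ac)
  finally show ?thesis .
qed

lemma sum_sum_subsets_eq_weighted:
  assumes "finite C" "finite B" "\<And>S. S \<in> C \<Longrightarrow> Y S \<subseteq> B"
  shows "(\<Sum>S\<in>C. \<Sum>p\<in>Y S. (g p :: real)) = (\<Sum>p\<in>B. real (card {S\<in>C. p \<in> Y S}) * g p)"
proof -
  have "{p. p \<in> B \<and> p \<in> Y S} = Y S" if "S \<in> C" for S
    using assms(3)[OF that] by blast
  then have "(\<Sum>S\<in>C. \<Sum>p\<in>Y S. g p) = (\<Sum>S\<in>C. \<Sum>p\<in>{p. p \<in> B \<and> p \<in> Y S}. g p)"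
    by (intro sum.cong) auto
  also have "\<dots> = (\<Sum>p\<in>B. \<Sum>S\<in>{S. S \<in> C \<and> p \<in> Y S}. g p)"
    by (rule sum.swap_restrict[OF assms(1,2)])
  finally show ?thesis
    by simp
qed

lemma sum_substates_merge_defect_le:
  assumes d: "2 \<le> s" "s \<le> d 0" "d 0 \<le> d 1" "d 1 \<le> d 2" "d 2 \<le> d 3" and \<alpha>: "\<alpha> \<in> bipartitions"
  shows "(\<Sum>S\<in>substate_choices d s. \<Sum>x\<in>idx S parties. \<Sum>y\<in>idx S parties. merge_defect \<alpha> \<psi> x y)
    \<le> max_pair_multiplicity d s * (\<Sum>x\<in>idx (full_carrier d) parties. \<Sum>y\<in>idx (full_carrier d) parties.
        merge_defect \<alpha> \<psi> x y)"
proof -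
  let ?K = "max_pair_multiplicity d s" and ?C = "substate_choices d s"
  let ?X = "idx (full_carrier d) parties" and ?g = "\<lambda>p. merge_defect \<alpha> \<psi> (fst p) (snd p)"
  have "(\<Sum>S\<in>?C. \<Sum>x\<in>idx S parties. \<Sum>y\<in>idx S parties. merge_defect \<alpha> \<psi> x y)
      = (\<Sum>S\<in>?C. \<Sum>p\<in>idx S parties \<times> idx S parties. ?g p)"
    by (simp add: sum.cartesian_product case_prod_beta)
  also have "\<dots> = (\<Sum>p\<in>?X \<times> ?X. real (card {S\<in>?C. p \<in> idx S parties \<times> idx S parties}) * ?g p)"
    using substate_choices_finite idx_full_carrier_finite idx_substate_subset
    by (intro sum_sum_subsets_eq_weighted) (auto simp: subset_iff)
  also have "\<dots> \<le> (\<Sum>p\<in>?X \<times> ?X. ?K * ?g p)"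
  proof (rule sum_mono)
    fix p assume p: "p \<in> ?X \<times> ?X"
    show "real (card {S\<in>?C. p \<in> idx S parties \<times> idx S parties}) * ?g p \<le> ?K * ?g p"
    proof (cases "?g p = 0")
      case False
      have xy: "fst p \<in> ?X" "snd p \<in> ?X"
        using p by auto
      then obtain i j where ij: "i \<in> \<alpha>" "j \<in> parties - \<alpha>" "fst p i \<noteq> snd p i" "fst p j \<noteq> snd p j"
        by (rule merge_defect_nonzero_witness[OF _ _ False])
      moreover have "i \<in> parties" "i \<noteq> j"
        using ij(1,2) \<alpha> by (auto simp: bipartitions_def)
      ultimately have "real (card {S\<in>?C. fst p \<in> idx S parties \<and> snd p \<in> idx S parties}) \<le> ?K"
        using card_substates_containing_pair_le[OF d xy, of i j] by blast
      then show ?thesis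
        by (intro mult_right_mono) (auto simp: mem_Times_iff merge_defect_nonneg)
    qed simp
  qed
  also have "\<dots> = ?K * (\<Sum>x\<in>?X. \<Sum>y\<in>?X. merge_defect \<alpha> \<psi> x y)"
    by (simp add: sum.cartesian_product case_prod_beta sum_distrib_left)
  finally show ?thesis .
qed

lemma sum_substates_conc_vec_le:
  assumes "2 \<le> s" "s \<le> d 0" "d 0 \<le> d 1" "d 1 \<le> d 2" "d 2 \<le> d 3"
  shows "(\<Sum>S\<in>substate_choices d s. (conc_vec S \<psi>)\<^sup>2)
    \<le> max_pair_multiplicity d s * (conc_vec (full_carrier d) \<psi>)\<^sup>2"
proof -
  let ?K = "max_pair_multiplicity d s" and ?C = "substate_choices d s"
  let ?G = "\<lambda>A \<alpha>. \<Sum>x\<in>idx A parties. \<Sum>y\<in>idx A parties. merge_defect \<alpha> \<psi> x y"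
  have "(\<Sum>S\<in>?C. (conc_vec S \<psi>)\<^sup>2) = (\<Sum>\<alpha>\<in>bipartitions. \<Sum>S\<in>?C. ?G S \<alpha>) / 8"
    by (simp add: conc_vec_power2 sum_divide_distrib[symmetric] sum.swap[of _ ?C])
  also have "\<dots> \<le> (\<Sum>\<alpha>\<in>bipartitions. ?K * ?G (full_carrier d) \<alpha>) / 8"
    using sum_substates_merge_defect_le[OF assms] by (intro divide_right_mono sum_mono) auto
  also have "\<dots> = ?K * (conc_vec (full_carrier d) \<psi>)\<^sup>2"
    by (simp add: conc_vec_power2 sum_distrib_left)
  finally show ?thesis .
qed

section \<open>Gram decompositions of positive semidefinite matrices\<close>

definition quad_form :: "'a set \<Rightarrow> ('a \<Rightarrow> 'a \<Rightarrow> complex) \<Rightarrow> ('a \<Rightarrow> complex) \<Rightarrow> complex" where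
  "quad_form I M \<phi> = (\<Sum>x\<in>I. \<Sum>y\<in>I. cnj (\<phi> x) * M x y * \<phi> y)"

definition psd_on :: "'a set \<Rightarrow> ('a \<Rightarrow> 'a \<Rightarrow> complex) \<Rightarrow> bool" where
  "psd_on I M \<longleftrightarrow> (\<forall>x\<in>I. \<forall>y\<in>I. M y x = cnj (M x y)) \<and>
     (\<forall>\<phi>. Im (quad_form I M \<phi>) = 0 \<and> 0 \<le> Re (quad_form I M \<phi>))"

definition gram_on :: "'a set \<Rightarrow> ('a \<Rightarrow> 'a \<Rightarrow> complex) \<Rightarrow> ('a \<Rightarrow> complex) list \<Rightarrow> bool" where
  "gram_on I M \<psi>s \<longleftrightarrow> (\<forall>x\<in>I. \<forall>y\<in>I. M x y = (\<Sum>\<psi>\<leftarrow>\<psi>s. \<psi> x * cnj (\<psi> y)))"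

lemma quad_form_insert:
  assumes "finite I" "i \<notin> I"
  shows "quad_form (insert i I) M \<phi> = quad_form I M \<phi> + cnj (\<phi> i) * (\<Sum>y\<in>I. M i y * \<phi> y)
     + (\<Sum>x\<in>I. cnj (\<phi> x) * M x i) * \<phi> i + cnj (\<phi> i) * M i i * \<phi> i"
  using assms by (simp add: quad_form_def sum.distrib sum_distrib_left sum_distrib_right algebra_simps)

lemma quad_form_upd: "i \<notin> I \<Longrightarrow> quad_form I M (\<phi>(i := t)) = quad_form I M \<phi>"
  unfolding quad_form_def by (intro sum.cong refl) auto

lemma psd_on_row_sum_cnj:
  assumes "psd_on (insert i I) M"
  shows "(\<Sum>x\<in>I. cnj (\<phi> x) * M x i) = cnj (\<Sum>y\<in>I. M i y * \<phi> y)"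
proof -
  have "M x i = cnj (M i x)" if "x \<in> I" for x
    using assms that unfolding psd_on_def by blast
  then show ?thesis
    unfolding cnj_sum complex_cnj_mult by (intro sum.cong) (auto simp: mult.commute)
qed

lemma psd_on_insert_quad_form_upd:
  fixes \<phi> :: "'a \<Rightarrow> complex"
  assumes "finite I" "i \<notin> I" "psd_on (insert i I) M"
  defines "u \<equiv> \<Sum>y\<in>I. M i y * \<phi> y"
  shows "quad_form (insert i I) M (\<phi>(i := t))
    = quad_form I M \<phi> + cnj t * u + cnj u * t + cnj t * M i i * t"
proof -
  have row: "(\<Sum>y\<in>I. M i y * (\<phi>(i := t)) y) = u"
    unfolding u_def using assms(2) by (intro sum.cong) auto
  have col: "(\<Sum>x\<in>I. cnj ((\<phi>(i := t)) x) * M x i) = cnj u"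
    unfolding u_def psd_on_row_sum_cnj[OF assms(3), symmetric] using assms(2) by (intro sum.cong) auto
  show ?thesis
    by (simp only: quad_form_insert[OF assms(1,2)] quad_form_upd[OF assms(2)] row col fun_upd_same)
qed

lemma psd_on_diag:
  assumes "finite I" "i \<notin> I" "psd_on (insert i I) M"
  shows "Im (M i i) = 0" "0 \<le> Re (M i i)"
proof -
  have "quad_form (insert i I) M ((\<lambda>_. 0)(i := 1)) = M i i"
    using psd_on_insert_quad_form_upd[OF assms, of "\<lambda>_. 0" 1] by (simp add: quad_form_def)
  moreover have "Im (quad_form (insert i I) M \<phi>) = 0" "0 \<le> Re (quad_form (insert i I) M \<phi>)" for \<phi>
    using assms(3) unfolding psd_on_def by blast+
  ultimately show "Im (M i i) = 0" "0 \<le> Re (M i i)"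
    by metis+
qed

lemma psd_on_restrict:
  assumes "finite I" "i \<notin> I" "psd_on (insert i I) M"
  shows "psd_on I M"
  unfolding psd_on_def
proof (intro conjI allI)
  show "\<forall>x\<in>I. \<forall>y\<in>I. M y x = cnj (M x y)"
    using assms(3) unfolding psd_on_def by blast
  fix \<phi>
  have "quad_form (insert i I) M (\<phi>(i := 0)) = quad_form I M \<phi>"
    using psd_on_insert_quad_form_upd[OF assms, of \<phi> 0] by simp
  moreover have "Im (quad_form (insert i I) M \<phi>') = 0" "0 \<le> Re (quad_form (insert i I) M \<phi>')" for \<phi>'
    using assms(3) unfolding psd_on_def by blast+
  ultimately show "Im (quad_form I M \<phi>) = 0" "0 \<le> Re (quad_form I M \<phi>)"
    by metis+
qed

text \<open>The test vector \<open>e\<^sub>y - k M\<^sub>i\<^sub>y e\<^sub>i\<close> gives the value \<open>M\<^sub>y\<^sub>y - 2k|M\<^sub>i\<^sub>y|\<^sup>2\<close>, negative for large \<open>k\<close>.\<close>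

lemma psd_on_zero_diag_row:
  assumes "finite I" "i \<notin> I" "psd_on (insert i I) M" "M i i = 0" "y \<in> I"
  shows "M i y = 0"
proof (rule ccontr)
  assume w0: "M i y \<noteq> 0"
  define w where "w = M i y"
  define k where "k = (Re (M y y) + 1) / (2 * (cmod w)\<^sup>2)"
  define e :: "_ \<Rightarrow> complex" where "e = (\<lambda>_. 0)(y := 1)"
  have I: "I = insert y (I - {y})"
    using assms(5) by auto
  have qe: "quad_form I M e = M y y"
    by (subst I, subst quad_form_insert) (use assms(1) in \<open>auto simp: quad_form_def e_def\<close>)
  have sw: "(\<Sum>z\<in>I. M i z * e z) = w"
    by (subst I, subst sum.insert) (use assms(1) in \<open>auto simp: e_def w_def\<close>)
  define \<phi> where "\<phi> = e(i := - of_real k * w)"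
  have "quad_form (insert i I) M \<phi> = M y y - 2 * of_real k * (cnj w * w)"
    using psd_on_insert_quad_form_upd[OF assms(1-3), of e "- of_real k * w"]
    unfolding \<phi>_def qe sw assms(4) by (simp add: algebra_simps)
  also have "cnj w * w = of_real ((cmod w)\<^sup>2)"
    by (subst complex_norm_square) (rule mult.commute)
  finally have "Re (quad_form (insert i I) M \<phi>) = Re (M y y) - 2 * k * (cmod w)\<^sup>2"
    by simp
  also have "\<dots> = -1"
    using w0 by (simp add: k_def w_def field_simps)
  finally show False
    using assms(3) unfolding psd_on_def by (metis neg_0_le_iff_le not_one_le_zero)
qed

text \<open>The quadratic form of the Schur complement is that of \<open>M\<close> with the \<open>i\<close>-th coordinate
  set to its minimiser \<open>-u / M\<^sub>i\<^sub>i\<close>.\<close>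

lemma psd_on_schur_complement:
  assumes "finite I" "i \<notin> I" "psd_on (insert i I) M" "0 < Re (M i i)"
  shows "psd_on I (\<lambda>x y. M x y - M x i * M i y / M i i)"
proof -
  let ?a = "M i i" and ?M' = "\<lambda>x y. M x y - M x i * M i y / M i i"
  have herm: "M y x = cnj (M x y)" if "x \<in> insert i I" "y \<in> insert i I" for x y
    using assms(3) that unfolding psd_on_def by blast
  have a_real: "cnj ?a = ?a"
    using psd_on_diag[OF assms(1-3)] by (simp add: complex_eq_iff)
  have a0: "?a \<noteq> 0"
    using assms(4) by auto
  have "?M' y x = cnj (?M' x y)" if "x \<in> I" "y \<in> I" for x y
    using that herm[of x y] herm[of i x] herm[of i y] a_real by simp
  moreover have "quad_form I ?M' \<phi> = quad_form (insert i I) M (\<phi>(i := - u / ?a))"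
    if u: "u = (\<Sum>y\<in>I. M i y * \<phi> y)" for \<phi> u
  proof -
    have "(\<Sum>x\<in>I. \<Sum>y\<in>I. cnj (\<phi> x) * (M x i * M i y / ?a) * \<phi> y)
        = (\<Sum>x\<in>I. cnj (\<phi> x) * M x i) * u / ?a"
      unfolding u sum_product sum_divide_distrib by (intro sum.cong refl) (simp add: algebra_simps)
    then have "quad_form I ?M' \<phi> = quad_form I M \<phi> - cnj u * u / ?a"
      unfolding quad_form_def psd_on_row_sum_cnj[OF assms(3)] u[symmetric]
      by (simp add: right_diff_distrib left_diff_distrib sum_subtractf)
    also have "\<dots> = quad_form (insert i I) M (\<phi>(i := - u / ?a))"
      using a0 a_real by (simp add: psd_on_insert_quad_form_upd[OF assms(1-3)] u field_simps)
    finally show ?thesis .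
  qed
  ultimately show ?thesis
    using assms(3) unfolding psd_on_def by metis
qed

lemma sum_list_outer_fun_upd_zero:
  "(\<Sum>\<psi>\<leftarrow>map (\<lambda>\<psi>. \<psi>(i := 0)) \<psi>s. \<psi> x * cnj (\<psi> y))
   = (if x = i \<or> y = i then 0 else (\<Sum>\<psi>\<leftarrow>\<psi>s. \<psi> x * cnj (\<psi> y)))"
  by (induction \<psi>s) auto

lemma gram_on_insert:
  assumes "gram_on I M' \<psi>s"
    and "\<And>x y. x \<in> insert i I \<Longrightarrow> y \<in> insert i I \<Longrightarrow> M x y = v x * cnj (v y) + M' x y"
    and "\<And>x. M' x i = 0" "\<And>y. M' i y = 0"
  shows "gram_on (insert i I) M (v # map (\<lambda>\<psi>. \<psi>(i := 0)) \<psi>s)"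
  unfolding gram_on_def
proof (intro ballI)
  fix x y assume "x \<in> insert i I" "y \<in> insert i I"
  then show "M x y = (\<Sum>\<psi>\<leftarrow>v # map (\<lambda>\<psi>. \<psi>(i := 0)) \<psi>s. \<psi> x * cnj (\<psi> y))"
    using assms unfolding gram_on_def
    by (simp only: list.map sum_list.Cons sum_list_outer_fun_upd_zero) auto
qed

lemma gram_on_insert_pos_pivot:
  assumes "finite I" "i \<notin> I" "psd_on (insert i I) M" "0 < Re (M i i)"
    and "gram_on I (\<lambda>x y. M x y - M x i * M i y / M i i) \<psi>s"
  defines "c \<equiv> complex_of_real (sqrt (Re (M i i)))"
  shows "gram_on (insert i I) M ((\<lambda>x. M x i / c) # map (\<lambda>\<psi>. \<psi>(i := 0)) \<psi>s)"
proof -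
  have a_real: "cnj (M i i) = M i i"
    using psd_on_diag[OF assms(1-3)] by (simp add: complex_eq_iff)
  have cc: "c * c = M i i" "cnj c = c"
    using assms(4) a_real by (simp_all add: c_def complex_eq_iff flip: of_real_mult)
  have herm: "cnj (M y i) = M i y" if "y \<in> insert i I" for y
  proof (cases "y = i")
    case False
    then show ?thesis
      using assms(3) that unfolding psd_on_def by (metis complex_cnj_cnj insertCI)
  qed (simp add: a_real)
  define M' where "M' x y = (if x = i \<or> y = i then 0 else M x y - M x i * M i y / M i i)" for x y
  have "gram_on I M' \<psi>s"
    using assms(2,5) by (auto simp: gram_on_def M'_def)
  moreover have "M x y = M x i / c * cnj (M y i / c) + M' x y"
    if "x \<in> insert i I" "y \<in> insert i I" for x y
  proof -
    have "M x i / c * cnj (M y i / c) = M x i * M i y / M i i"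
      using herm[OF that(2)] by (simp add: cc(2) times_divide_times_eq flip: cc(1))
    then show ?thesis
      using assms(4) by (auto simp: M'_def)
  qed
  ultimately show ?thesis
    by (rule gram_on_insert) (auto simp: M'_def)
qed

lemma gram_on_insert_zero_pivot:
  assumes "finite I" "i \<notin> I" "psd_on (insert i I) M" "M i i = 0" "gram_on I M \<psi>s"
  shows "gram_on (insert i I) M (map (\<lambda>\<psi>. \<psi>(i := 0)) \<psi>s)"
proof -
  have row: "M i y = 0" "M y i = 0" if "y \<in> I" for y
    using psd_on_zero_diag_row[OF assms(1-4) that] assms(3) that unfolding psd_on_def
    by (metis complex_cnj_zero insertCI)+
  define M' where "M' x y = (if x = i \<or> y = i then 0 else M x y)" for x y
  have "gram_on I M' \<psi>s"
    using assms(2,5) by (auto simp: gram_on_def M'_def)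
  moreover have "M x y = 0 * cnj 0 + M' x y" if "x \<in> insert i I" "y \<in> insert i I" for x y
    using that row assms(4) by (auto simp: M'_def)
  ultimately have "gram_on (insert i I) M ((\<lambda>_. 0) # map (\<lambda>\<psi>. \<psi>(i := 0)) \<psi>s)"
    by (rule gram_on_insert) (auto simp: M'_def)
  then show ?thesis
    by (simp add: gram_on_def)
qed

text \<open>Cholesky factorisation: eliminate one index at a time, using the Schur complement of a
  positive pivot, or dropping the index if its diagonal entry (and hence its row) vanishes.\<close>

lemma psd_on_gram_decomposition:
  assumes "finite I" "psd_on I M"
  shows "\<exists>\<psi>s. gram_on I M \<psi>s"
  using assms
proof (induction I arbitrary: M rule: finite_induct)
  case empty
  then show ?case by (simp add: gram_on_def)
next
  case (insert i I M)
  consider "0 < Re (M i i)" | "M i i = 0"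
    using psd_on_diag[OF insert.hyps insert.prems] by (force simp: complex_eq_iff)
  then show ?case
  proof cases
    case 1
    then show ?thesis
      using insert.IH[OF psd_on_schur_complement[OF insert.hyps insert.prems 1]]
        gram_on_insert_pos_pivot[OF insert.hyps insert.prems 1] by blast
  next
    case 2
    then show ?thesis
      using insert.IH[OF psd_on_restrict[OF insert.hyps insert.prems]]
        gram_on_insert_zero_pivot[OF insert.hyps insert.prems 2] by blast
  qed
qed

section \<open>Convex roof\<close>

definition decomposes :: "(nat \<Rightarrow> nat set) \<Rightarrow> op4 \<Rightarrow> vec4 list \<Rightarrow> bool" where
  "decomposes A \<rho> \<psi>s \<longleftrightarrow> (\<forall>x\<in>idx A parties. \<forall>y\<in>idx A parties. \<rho> x y = (\<Sum>\<psi>\<leftarrow>\<psi>s. proj \<psi> x y))"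

lemma conc_eq_Inf: "conc A \<rho> = Inf {sum_list (map (conc_vec A) \<psi>s) | \<psi>s. decomposes A \<rho> \<psi>s}"
  by (simp add: conc_def decomposes_def)

lemma density_op_decomposes:
  assumes "density_op d \<rho>"
  obtains \<psi>s where "decomposes (full_carrier d) \<rho> \<psi>s"
proof -
  have "psd_on (idx (full_carrier d) parties) \<rho>"
    using assms unfolding density_op_def psd_on_def quad_form_def Let_def by blast
  then obtain \<psi>s where "gram_on (idx (full_carrier d) parties) \<rho> \<psi>s"
    using psd_on_gram_decomposition[OF idx_full_carrier_finite] by blast
  then have "decomposes (full_carrier d) \<rho> \<psi>s"
    by (simp add: gram_on_def decomposes_def proj_def)
  then show thesis
    by (rule that)
qed

lemma conc_le_decomposition: "decomposes A \<rho> \<psi>s \<Longrightarrow> conc A \<rho> \<le> sum_list (map (conc_vec A) \<psi>s)"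
  unfolding conc_eq_Inf
  by (rule cInf_lower) (auto intro!: bdd_belowI[where m=0] sum_list_nonneg simp: conc_vec_nonneg)

lemma conc_nonneg: "decomposes A \<rho> \<psi>s \<Longrightarrow> 0 \<le> conc A \<rho>"
  unfolding conc_eq_Inf by (rule cInf_greatest) (auto intro!: sum_list_nonneg simp: conc_vec_nonneg)

lemma conc_greatest:
  "decomposes A \<rho> \<psi>s \<Longrightarrow> (\<And>\<psi>s. decomposes A \<rho> \<psi>s \<Longrightarrow> c \<le> sum_list (map (conc_vec A) \<psi>s))
    \<Longrightarrow> c \<le> conc A \<rho>"
  unfolding conc_eq_Inf by (rule cInf_greatest) auto

lemma decomposes_substate:
  "decomposes (full_carrier d) \<rho> \<psi>s \<Longrightarrow> S \<in> substate_choices d s \<Longrightarrow> decomposes S \<rho> \<psi>s"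
  using idx_substate_subset unfolding decomposes_def by blast

lemma L2_set_sum_list_le: "L2_set (\<lambda>S. \<Sum>\<psi>\<leftarrow>\<psi>s. f \<psi> S) C \<le> (\<Sum>\<psi>\<leftarrow>\<psi>s. L2_set (f \<psi>) C)"
proof (induction \<psi>s)
  case Nil
  then show ?case by (simp add: L2_set_0')
next
  case (Cons \<psi> \<psi>s)
  have "L2_set (\<lambda>S. f \<psi> S + (\<Sum>\<psi>\<leftarrow>\<psi>s. f \<psi> S)) C \<le> L2_set (f \<psi>) C + L2_set (\<lambda>S. \<Sum>\<psi>\<leftarrow>\<psi>s. f \<psi> S) C"
    by (rule L2_set_triangle_ineq)
  then show ?case
    using Cons by simp
qed

lemma L2_substates_conc_le_decomposition:
  assumes "2 \<le> s" "s \<le> d 0" "d 0 \<le> d 1" "d 1 \<le> d 2" "d 2 \<le> d 3"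
    and dec: "decomposes (full_carrier d) \<rho> \<psi>s"
  shows "L2_set (\<lambda>S. conc S \<rho>) (substate_choices d s)
    \<le> sqrt (max_pair_multiplicity d s) * sum_list (map (conc_vec (full_carrier d)) \<psi>s)"
proof -
  let ?C = "substate_choices d s" and ?K = "max_pair_multiplicity d s"
  have "conc S \<rho> \<le> (\<Sum>\<psi>\<leftarrow>\<psi>s. conc_vec S \<psi>)" "0 \<le> conc S \<rho>" if "S \<in> ?C" for S
    using conc_le_decomposition[OF decomposes_substate[OF dec that]]
      conc_nonneg[OF decomposes_substate[OF dec that]] by (simp_all add: comp_def)
  then have "L2_set (\<lambda>S. conc S \<rho>) ?C \<le> L2_set (\<lambda>S. \<Sum>\<psi>\<leftarrow>\<psi>s. conc_vec S \<psi>) ?C"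
    by (intro L2_set_mono)
  also have "\<dots> \<le> (\<Sum>\<psi>\<leftarrow>\<psi>s. L2_set (\<lambda>S. conc_vec S \<psi>) ?C)"
    by (rule L2_set_sum_list_le)
  also have "\<dots> \<le> (\<Sum>\<psi>\<leftarrow>\<psi>s. sqrt ?K * conc_vec (full_carrier d) \<psi>)"
  proof (rule sum_list_mono)
    fix \<psi>
    have "L2_set (\<lambda>S. conc_vec S \<psi>) ?C \<le> sqrt (?K * (conc_vec (full_carrier d) \<psi>)\<^sup>2)"
      unfolding L2_set_def by (rule real_sqrt_le_mono) (rule sum_substates_conc_vec_le[OF assms(1-5)])
    then show "L2_set (\<lambda>S. conc_vec S \<psi>) ?C \<le> sqrt ?K * conc_vec (full_carrier d) \<psi>"
      by (simp add: real_sqrt_mult conc_vec_nonneg)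
  qed
  also have "\<dots> = sqrt ?K * sum_list (map (conc_vec (full_carrier d)) \<psi>s)"
    by (simp add: sum_list_const_mult comp_def)
  finally show ?thesis .
qed

theorem theorem4:
  fixes d :: "nat \<Rightarrow> nat" and \<rho> :: op4 and s :: nat
  assumes "2 \<le> d 0" "d 0 \<le> d 1" "d 1 \<le> d 2" "d 2 \<le> d 3"
    and "density_op d \<rho>"
    and "2 \<le> s" "s \<le> d 0"
  shows "(conc (full_carrier d) \<rho>)\<^sup>2 \<ge>
    1 / (real ((d 0 - 2) choose (s - 2)) * real ((d 1 - 2) choose (s - 2))
         * real ((d 2 - 1) choose (s - 1)) * real ((d 3 - 1) choose (s - 1)))
    * (\<Sum>S\<in>substate_choices d s. (conc S \<rho>)\<^sup>2)"
proof -
  let ?K = "max_pair_multiplicity d s" and ?L = "L2_set (\<lambda>S. conc S \<rho>) (substate_choices d s)"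
  have K_pos: "0 < ?K"
    using assms by (simp add: max_pair_multiplicity_def zero_less_binomial_iff)
  obtain \<psi>s where "decomposes (full_carrier d) \<rho> \<psi>s"
    using density_op_decomposes[OF assms(5)] .
  then have "?L / sqrt ?K \<le> conc (full_carrier d) \<rho>"
    using L2_substates_conc_le_decomposition[OF assms(6,7,2-4)] K_pos
    by (intro conc_greatest) (auto simp: divide_le_eq mult.commute)
  then have "(?L / sqrt ?K)\<^sup>2 \<le> (conc (full_carrier d) \<rho>)\<^sup>2"
    using K_pos by (intro power_mono) (auto simp: L2_set_nonneg)
  then show ?thesis
    using K_pos by (simp add: power_divide L2_set_def sum_nonneg max_pair_multiplicity_def)
qed

end
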